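(* Let $p\ge1$, $s\ge r\ge2$, let $Q$ be an $s$-vertex $r$-graph and let $\mathcal P$ be a hereditary property of $r$-graphs. Then $\lambda^{(p)}(Q,\mathcal P)\ge\pi(Q,\mathcal P)$.
   Context: An $r$-graph ($r\ge 2$) is a finite hypergraph all of whose edges have exactly $r$ vertices. For $I\subseteq V(H)$, $H[I]$ denotes the induced subhypergraph on $I$. For an $s$-vertex $r$-graph $Q$ and an $r$-graph $H$, $\mathcal N(Q,H)$ is the number of (not necessarily induced) subgraphs of $H$ isomorphic to $Q$. For an $n$-vertex $r$-graph $H$ with vertex set $[n]$ and $\mathbf x\in\mathbb R^n$, $P_{Q,H}(\mathbf x)=s!\sum_{\{i_1,\dots,i_s\}\in\binom{[n]}{s}}\mathcal N(Q,H[\{i_1,\dots,i_s\}])\,x_{i_1}\cdots x_{i_s}$, and for $p\ge1$, $\lambda^{(p)}(Q,H)=\max_{\|\mathbf x\|_p=1}P_{Q,H}(\mathbf x)$. A hereditary property $\mathcal P$ of $r$-graphs is a family of $r$-graphs closed under isomorphism and under taking induced subgraphs; as a standing assumption, whenever $H\in\mathcal P$, the disjoint union of $H$ with an isolated vertex is also in $\mathcal P$. $\mathcal P_n$ is the set of members of $\mathcal P$ with $n$ vertices. $ex(Q,\mathcal P_n)=\max\{\mathcal N(Q,H):H\in\mathcal P_n\}$ and $\pi(Q,\mathcal P)=\lim_{n\to\infty}ex(Q,\mathcal P_n)/\binom ns$ (this limit exists). $\lambda^{(p)}(Q,\mathcal P_n)=\max\{\lambda^{(p)}(Q,H):H\in\mathcal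 P_n\}$ and $\lambda^{(p)}(Q,\mathcal P)=\lim_{n\to\infty}\lambda^{(p)}(Q,\mathcal P_n)n^{s/p-s}$ (this limit exists). *)

theory Defs
  imports "HOL-Analysis.Analysis"
begin

text \<open>An r-graph with vertices in nat: a pair (V, E) of a finite vertex set and a set
  of edges, each an r-element subset of V.\<close>
type_synonym hgraph = "nat set \<times> nat set set"

definition is_rgraph :: "nat \<Rightarrow> hgraph \<Rightarrow> bool" where
  "is_rgraph r H \<longleftrightarrow> finite (fst H) \<and> (\<forall>e\<in>snd H. e \<subseteq> fst H \<and> card e = r)"

definition hg_iso :: "hgraph \<Rightarrow> hgraph \<Rightarrow> bool" where
  "hg_iso G H \<longleftrightarrow> (\<exists>f. bij_betw f (fst G) (fst H) \<and> snd H = (\<lambda>e. f ` e) ` snd G)"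

definition induced :: "hgraph \<Rightarrow> nat set \<Rightarrow> hgraph" where
  "induced H I = (I, {e \<in> snd H. e \<subseteq> I})"

definition subgraph :: "hgraph \<Rightarrow> hgraph \<Rightarrow> bool" where
  "subgraph F H \<longleftrightarrow> fst F \<subseteq> fst H \<and> snd F \<subseteq> snd H \<and> (\<forall>e\<in>snd F. e \<subseteq> fst F)"

definition num_copies :: "hgraph \<Rightarrow> hgraph \<Rightarrow> nat" where
  "num_copies Q H = card {F. subgraph F H \<and> hg_iso F Q}"

definition lagr_poly :: "hgraph \<Rightarrow> hgraph \<Rightarrow> (nat \<Rightarrow> real) \<Rightarrow> real" where
  "lagr_poly Q H x = fact (card (fst Q)) *
     (\<Sum>I\<in>{I. I \<subseteq> fst H \<and> card I = card (fst Q)}.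
        real (num_copies Q (induced H I)) * (\<Prod>i\<in>I. x i))"

definition pnorm :: "real \<Rightarrow> nat set \<Rightarrow> (nat \<Rightarrow> real) \<Rightarrow> real" where
  "pnorm p V x = (\<Sum>i\<in>V. \<bar>x i\<bar> powr p) powr (1 / p)"

definition lam :: "real \<Rightarrow> hgraph \<Rightarrow> hgraph \<Rightarrow> real" where
  "lam p Q H = Sup {lagr_poly Q H x | x. pnorm p (fst H) x = 1}"

definition hereditary :: "nat \<Rightarrow> hgraph set \<Rightarrow> bool" where
  "hereditary r P \<longleftrightarrow>
     (\<forall>H\<in>P. is_rgraph r H) \<and>
     (\<forall>G H. H \<in> P \<longrightarrow> hg_iso H G \<longrightarrow> G \<in> P) \<and>
     (\<forall>H I. H \<in> P \<longrightarrow> I \<subseteq> fst H \<longrightarrow> induced H I \<in> P) \<and>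
     (\<forall>H v. H \<in> P \<longrightarrow> v \<notin> fst H \<longrightarrow> (insert v (fst H), snd H) \<in> P)"

text \<open>P_n: members of P on the vertex set [n] (represented as {0..<n}).\<close>
definition Pn :: "hgraph set \<Rightarrow> nat \<Rightarrow> hgraph set" where
  "Pn P n = {H \<in> P. fst H = {0..<n}}"

definition ex_num :: "hgraph \<Rightarrow> hgraph set \<Rightarrow> nat \<Rightarrow> nat" where
  "ex_num Q P n = Max (num_copies Q ` Pn P n)"

definition pi_dens :: "hgraph \<Rightarrow> hgraph set \<Rightarrow> real" where
  "pi_dens Q P = lim (\<lambda>n. real (ex_num Q P n) / real (n choose card (fst Q)))"

definition lam_n :: "real \<Rightarrow> hgraph \<Rightarrow> hgraph set \<Rightarrow> nat \<Rightarrow> real" where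
  "lam_n p Q P n = Sup (lam p Q ` Pn P n)"

definition lam_prop :: "real \<Rightarrow> hgraph \<Rightarrow> hgraph set \<Rightarrow> real" where
  "lam_prop p Q P = lim (\<lambda>n. lam_n p Q P n * real n powr (real (card (fst Q)) / p - real (card (fst Q))))"

end

theory Submission
  imports Defs
begin

text \<open>Let d(m) = ex(Q,P_m)/C(m,s). Averaging over the m-vertex induced subgraphs of an extremal
  k-vertex member of P shows that d is non-increasing, so d(n) tends to \<pi>. Evaluating P_{Q,H} at
  the constant unit vector of an extremal H gives
  \<lambda>^(p)(Q,P_n) n^(s/p-s) \<ge> s! C(n,s) n^(-s) d(n) \<longrightarrow> \<pi>, so the claim follows once the normalised
  sequence converges. For p = 1 it is non-decreasing (add an isolated vertex) and bounded. For p > 1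
  it tends to \<pi>: the multilinear polynomial \<Sum>_I (N(Q,H[I]) - d(m)) \<Prod>_{i\<in>I} q_i takes its maximum
  over the unit cube at a vertex 1_S, where it is at most ex(Q,P_m), while s! e_s(|x|) \<le> |x|_1^s \<le>
  n^(s-s/p); hence the normalised sequence is at most d(m) + O_m(n^(s/p-s)) for every m.\<close>

section \<open>Counting copies\<close>

definition copies :: "hgraph \<Rightarrow> hgraph \<Rightarrow> hgraph set" where
  "copies Q H = {F. subgraph F H \<and> hg_iso F Q}"

lemma num_copies_eq_card: "num_copies Q H = card (copies Q H)"
  by (simp add: num_copies_def copies_def)

lemma card_vertices_copies: "F \<in> copies Q H \<Longrightarrow> card (fst F) = card (fst Q)"
  by (auto simp: copies_def hg_iso_def intro: bij_betw_same_card)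

lemma copies_induced:
  "I \<subseteq> fst H \<Longrightarrow> copies Q (induced H I) = {F \<in> copies Q H. fst F \<subseteq> I}"
  unfolding copies_def subgraph_def induced_def by (auto; meson subset_iff)

lemma finite_copies:
  assumes "finite (fst H)"
  shows "finite (copies Q H)"
proof (rule finite_subset)
  show "copies Q H \<subseteq> Pow (fst H) \<times> Pow (Pow (fst H))"
    by (auto simp: copies_def subgraph_def mem_Times_iff; blast)
qed (use assms in simp)

lemma num_copies_induced_mono:
  assumes "I \<subseteq> J" "J \<subseteq> fst H" "finite (fst H)"
  shows "num_copies Q (induced H I) \<le> num_copies Q (induced H J)"
  unfolding num_copies_eq_card
proof (rule card_mono)
  show "finite (copies Q (induced H J))"
    using assms by (intro finite_copies) (auto simp: induced_def intro: finite_subset)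
  show "copies Q (induced H I) \<subseteq> copies Q (induced H J)"
    using assms by (auto simp: copies_induced)
qed

lemma fst_induced [simp]: "fst (induced H I) = I"
  by (simp add: induced_def)

lemma induced_induced: "I \<subseteq> S \<Longrightarrow> induced (induced H S) I = induced H I"
  by (auto simp: induced_def)

lemma card_supersets:
  assumes "finite V" "A \<subseteq> V" "card A \<le> m"
  shows "card {S. S \<subseteq> V \<and> card S = m \<and> A \<subseteq> S} = (card V - card A) choose (m - card A)"
proof -
  have fin: "finite A" "\<And>T. T \<subseteq> V \<Longrightarrow> finite T"
    using assms finite_subset by blast+
  have "card {S. S \<subseteq> V \<and> card S = m \<and> A \<subseteq> S} = card {T. T \<subseteq> V - A \<and> card T = m - card A}"
  proof (rule bij_betw_same_card[of "\<lambda>S. S - A"], rule bij_betw_byWitness[where f'="\<lambda>T. T \<union> A"])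
    show "(\<lambda>T. T \<union> A) ` {T. T \<subseteq> V - A \<and> card T = m - card A} \<subseteq> {S. S \<subseteq> V \<and> card S = m \<and> A \<subseteq> S}"
    proof safe
      fix T assume T: "T \<subseteq> V - A" "card T = m - card A"
      then have "card (T \<union> A) = card T + card A" using fin by (intro card_Un_disjoint) auto
      then show "card (T \<union> A) = m" using T assms(3) by simp
    qed (use assms in auto)
  qed (use assms fin in \<open>auto simp: card_Diff_subset\<close>)
  also have "\<dots> = (card V - card A) choose (m - card A)"
    using assms fin by (simp add: n_subsets card_Diff_subset)
  finally show ?thesis .
qed

text \<open>Each copy of Q in H lies in exactly C(n-s, m-s) of the m-subsets of V(H).\<close>
lemma sum_num_copies_induced:
  assumes "finite (fst H)" "card (fst Q) \<le> m"
  shows "(\<Sum>S\<in>{S. S \<subseteq> fst H \<and> card S = m}. num_copies Q (induced H S))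
         = ((card (fst H) - card (fst Q)) choose (m - card (fst Q))) * num_copies Q H"
proof -
  let ?C = "copies Q H" and ?SS = "{S. S \<subseteq> fst H \<and> card S = m}"
  have fin: "finite ?SS" "finite ?C" using assms(1) by (simp_all add: finite_copies)
  have "(\<Sum>S\<in>?SS. num_copies Q (induced H S)) = (\<Sum>S\<in>?SS. card {F \<in> ?C. fst F \<subseteq> S})"
    by (intro sum.cong) (auto simp: num_copies_eq_card copies_induced)
  also have "\<dots> = (\<Sum>F\<in>?C. card {S \<in> ?SS. fst F \<subseteq> S})"
    using sum.swap_restrict[OF fin, of "\<lambda>_ _. 1::nat" "\<lambda>S F. fst F \<subseteq> S"] by simp
  also have "\<dots> = (\<Sum>F\<in>?C. (card (fst H) - card (fst Q)) choose (m - card (fst Q)))"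
  proof (rule sum.cong)
    fix F assume F: "F \<in> ?C"
    then have "fst F \<subseteq> fst H" by (auto simp: copies_def subgraph_def)
    then show "card {S \<in> ?SS. fst F \<subseteq> S} = (card (fst H) - card (fst Q)) choose (m - card (fst Q))"
      using card_supersets[OF assms(1)] card_vertices_copies[OF F] assms(2) by (simp add: conj_assoc)
  qed simp
  finally show ?thesis by (simp add: num_copies_eq_card)
qed

lemma sum_num_copies_induced_card_eq:
  "finite (fst H) \<Longrightarrow>
   (\<Sum>S\<in>{S. S \<subseteq> fst H \<and> card S = card (fst Q)}. num_copies Q (induced H S)) = num_copies Q H"
  using sum_num_copies_induced[of H Q "card (fst Q)"] by simp

lemma sum_num_copies_induced_subsets:
  assumes "finite S"
  shows "(\<Sum>I\<in>{I. I \<subseteq> S \<and> card I = card (fst Q)}. num_copies Q (induced H I))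
         = num_copies Q (induced H S)"
proof -
  have "(\<Sum>I\<in>{I. I \<subseteq> S \<and> card I = card (fst Q)}. num_copies Q (induced H I))
      = (\<Sum>I\<in>{I. I \<subseteq> fst (induced H S) \<and> card I = card (fst Q)}. num_copies Q (induced (induced H S) I))"
    by (intro sum.cong) (auto simp: induced_induced)
  also have "\<dots> = num_copies Q (induced H S)"
    using assms by (intro sum_num_copies_induced_card_eq) simp
  finally show ?thesis .
qed

lemma hg_iso_image:
  assumes "hg_iso F Q" "inj_on h (fst F)" "\<forall>e\<in>snd F. e \<subseteq> fst F"
  shows "hg_iso (h ` fst F, image h ` snd F) Q"
proof -
  from assms(1) obtain g where g: "bij_betw g (fst F) (fst Q)" "snd Q = image g ` snd F"
    by (auto simp: hg_iso_def)
  let ?k = "g \<circ> inv_into (fst F) h"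
  have "bij_betw ?k (h ` fst F) (fst Q)"
    using bij_betw_trans[OF bij_betw_inv_into[OF inj_on_imp_bij_betw[OF assms(2)]] g(1)] .
  moreover have "?k ` (h ` e) = g ` e" if "e \<in> snd F" for e
    using assms(2,3) that by (force simp: image_comp inv_into_f_f subset_iff)
  then have "snd Q = image ?k ` (image h ` snd F)"
    using g(2) by (force simp: image_comp)
  ultimately show ?thesis unfolding hg_iso_def by auto
qed

lemma num_copies_le_image:
  assumes "inj_on f (fst H)" "finite (fst H)" "\<forall>e\<in>snd H. e \<subseteq> fst H"
  shows "num_copies Q H \<le> num_copies Q (f ` fst H, image f ` snd H)"
  unfolding num_copies_eq_card
proof (rule card_inj_on_le)
  let ?phi = "\<lambda>F. (f ` fst F, image f ` snd F)"
  show "?phi ` copies Q H \<subseteq> copies Q (f ` fst H, image f ` snd H)"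
  proof
    fix G assume "G \<in> ?phi ` copies Q H"
    then obtain F where F: "F \<in> copies Q H" "G = ?phi F" by blast
    then have "subgraph F H" "hg_iso F Q" by (auto simp: copies_def)
    then have "fst F \<subseteq> fst H" "snd F \<subseteq> snd H" "\<forall>e\<in>snd F. e \<subseteq> fst F" "hg_iso F Q"
      by (auto simp: subgraph_def)
    moreover have "inj_on f (fst F)" using assms(1) \<open>fst F \<subseteq> fst H\<close> by (rule inj_on_subset)
    ultimately show "G \<in> copies Q (f ` fst H, image f ` snd H)"
      using F(2) hg_iso_image by (auto simp: copies_def subgraph_def intro!: imageI)
  qed
  show "inj_on ?phi (copies Q H)"
  proof (rule inj_onI)
    fix F1 F2 assume F: "F1 \<in> copies Q H" "F2 \<in> copies Q H" "?phi F1 = ?phi F2"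
    have "fst F1 \<subseteq> fst H" "snd F1 \<subseteq> Pow (fst H)" "fst F2 \<subseteq> fst H" "snd F2 \<subseteq> Pow (fst H)"
      using F(1,2) unfolding copies_def subgraph_def by blast+
    then have "fst F1 = fst F2" "snd F1 = snd F2"
      using F(3) inj_on_image_eq_iff[OF assms(1)] inj_on_image_eq_iff[OF inj_on_image_Pow[OF assms(1)]]
      by auto
    then show "F1 = F2" by (simp add: prod_eq_iff)
  qed
  show "finite (copies Q (f ` fst H, image f ` snd H))" using assms(2) by (simp add: finite_copies)
qed

lemma lagr_poly_const:
  assumes "finite (fst H)"
  shows "lagr_poly Q H (\<lambda>_. c) = fact (card (fst Q)) * c ^ card (fst Q) * real (num_copies Q H)"
proof -
  have "lagr_poly Q H (\<lambda>_. c) = fact (card (fst Q)) * c ^ card (fst Q) *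
      real (\<Sum>I\<in>{I. I \<subseteq> fst H \<and> card I = card (fst Q)}. num_copies Q (induced H I))"
    unfolding lagr_poly_def of_nat_sum sum_distrib_left
    by (intro sum.cong) (auto simp: algebra_simps)
  then show ?thesis using sum_num_copies_induced_card_eq[OF assms] by simp
qed

section \<open>Inequalities for multilinear polynomials and p-norms\<close>

definition elem_sym :: "nat set \<Rightarrow> nat \<Rightarrow> (nat \<Rightarrow> real) \<Rightarrow> real" where
  "elem_sym V k z = (\<Sum>I\<in>{I. I \<subseteq> V \<and> card I = k}. \<Prod>i\<in>I. z i)"

lemma elem_sym_0: "finite V \<Longrightarrow> elem_sym V 0 z = 1"
proof -
  assume "finite V"
  then have "{I. I \<subseteq> V \<and> card I = 0} = {{}}"
    by (auto simp: card_eq_0_iff rev_finite_subset)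
  then show ?thesis by (simp add: elem_sym_def)
qed

lemma elem_sym_mono_set:
  assumes "finite V" "W \<subseteq> V" "\<forall>i\<in>V. z i \<ge> 0"
  shows "elem_sym W k z \<le> elem_sym V k z"
  unfolding elem_sym_def
  using assms by (intro sum_mono2) (auto intro!: prod_nonneg)

lemma elem_sym_Suc:
  assumes "finite V"
  shows "real (Suc k) * elem_sym V (Suc k) z = (\<Sum>i\<in>V. z i * elem_sym (V - {i}) k z)"
proof -
  let ?A = "{I. I \<subseteq> V \<and> card I = Suc k}"
  have fin: "finite ?A" "\<And>I. I \<subseteq> V \<Longrightarrow> finite I"
    using assms finite_subset by auto
  have "real (Suc k) * elem_sym V (Suc k) z = (\<Sum>I\<in>?A. \<Sum>i\<in>I. z i * (\<Prod>j\<in>I - {i}. z j))"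
    unfolding elem_sym_def sum_distrib_left
    using fin(2) by (intro sum.cong) (auto simp: prod.remove[symmetric])
  also have "\<dots> = (\<Sum>I\<in>?A. \<Sum>i\<in>{i \<in> V. i \<in> I}. z i * (\<Prod>j\<in>I - {i}. z j))"
    by (intro sum.cong) auto
  also have "\<dots> = (\<Sum>i\<in>V. \<Sum>I\<in>{I \<in> ?A. i \<in> I}. z i * (\<Prod>j\<in>I - {i}. z j))"
    by (rule sum.swap_restrict[OF fin(1) assms])
  also have "\<dots> = (\<Sum>i\<in>V. z i * elem_sym (V - {i}) k z)"
    unfolding elem_sym_def sum_distrib_left
  proof (rule sum.cong[OF refl])
    fix i assume i: "i \<in> V"
    have fin_i: "finite J" if "J \<subseteq> V - {i}" for J
      using that fin(2) by blast
    show "(\<Sum>I\<in>{I \<in> ?A. i \<in> I}. z i * (\<Prod>j\<in>I - {i}. z j))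
        = (\<Sum>J\<in>{J. J \<subseteq> V - {i} \<and> card J = k}. z i * (\<Prod>j\<in>J. z j))"
      by (rule sum.reindex_bij_witness[where i="insert i" and j="\<lambda>I. I - {i}"])
        (use i fin_i in \<open>auto simp: card_insert_if insert_absorb\<close>)
  qed
  finally show ?thesis .
qed

text \<open>Maclaurin's inequality in its crudest form: every product of k distinct z_i occurs k! times
  in the expansion of the k-th power of the sum.\<close>
lemma fact_elem_sym_le_power_sum:
  assumes "finite V" "\<forall>i\<in>V. z i \<ge> 0"
  shows "fact k * elem_sym V k z \<le> (\<Sum>i\<in>V. z i) ^ k"
proof (induction k)
  case 0
  then show ?case using assms by (simp add: elem_sym_0)
next
  case (Suc k)
  have "fact (Suc k) * elem_sym V (Suc k) z = fact k * (real (Suc k) * elem_sym V (Suc k) z)"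
    by (simp add: algebra_simps)
  also have "\<dots> = fact k * (\<Sum>i\<in>V. z i * elem_sym (V - {i}) k z)"
    by (simp only: elem_sym_Suc[OF assms(1)])
  also have "\<dots> \<le> fact k * (\<Sum>i\<in>V. z i * elem_sym V k z)"
    using assms by (intro mult_left_mono sum_mono elem_sym_mono_set) auto
  also have "\<dots> = (\<Sum>i\<in>V. z i) * (fact k * elem_sym V k z)"
    by (simp add: sum_distrib_right algebra_simps)
  also have "\<dots> \<le> (\<Sum>i\<in>V. z i) * (\<Sum>i\<in>V. z i) ^ k"
    using Suc.IH assms by (intro mult_left_mono sum_nonneg) auto
  finally show ?case by simp
qed

lemma prod_fun_upd_split:
  fixes y :: "nat \<Rightarrow> real"
  assumes "finite I"
  shows "(\<Prod>i\<in>I. y i) = (1 - y u) * (\<Prod>i\<in>I. (y(u := 0)) i) + y u * (\<Prod>i\<in>I. (y(u := 1)) i)"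
proof (cases "u \<in> I")
  case True
  have "(\<Prod>i\<in>I. (y(u := c)) i) = c * (\<Prod>i\<in>I - {u}. y i)" for c
  proof -
    have "(\<Prod>i\<in>I - {u}. (y(u := c)) i) = (\<Prod>i\<in>I - {u}. y i)"
      by (intro prod.cong) auto
    then show ?thesis using True assms by (simp add: prod.remove[of I u])
  qed
  moreover have "(\<Prod>i\<in>I. y i) = y u * (\<Prod>i\<in>I - {u}. y i)"
    using True assms by (simp add: prod.remove)
  ultimately show ?thesis by (simp add: algebra_simps)
next
  case False
  then have "(\<Prod>i\<in>I. (y(u := c)) i) = (\<Prod>i\<in>I. y i)" for c
    by (auto intro: prod.cong)
  then show ?thesis by (simp add: algebra_simps)
qed

text \<open>A multilinear polynomial attains its maximum over the unit cube at a vertex: being affine in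
  each coordinate, the coordinates can be rounded to 0 or 1 one at a time without decreasing it.\<close>
lemma multilinear_le_at_vertex:
  fixes a :: "nat set \<Rightarrow> real" and FF :: "nat set set"
  assumes "\<forall>I\<in>FF. finite I" "finite U" "\<forall>i\<in>U. 0 \<le> q i \<and> q i \<le> 1"
  shows "\<exists>y. (\<forall>i\<in>U. y i = 0 \<or> y i = 1) \<and> (\<forall>i. i \<notin> U \<longrightarrow> y i = q i) \<and>
          (\<Sum>I\<in>FF. a I * (\<Prod>i\<in>I. q i)) \<le> (\<Sum>I\<in>FF. a I * (\<Prod>i\<in>I. y i))"
  using assms(2,3)
proof (induction U arbitrary: q rule: finite_induct)
  case empty
  then show ?case by auto
next
  case (insert u U)
  let ?f = "\<lambda>y. (\<Sum>I\<in>FF. a I * (\<Prod>i\<in>I. y i))"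
  obtain y where y: "\<forall>i\<in>U. y i = 0 \<or> y i = 1" "\<forall>i. i \<notin> U \<longrightarrow> y i = q i" "?f q \<le> ?f y"
    using insert.IH[of q] insert.prems by auto
  have yu: "0 \<le> y u" "y u \<le> 1" using y(2) insert.hyps insert.prems by auto
  have "?f y = (\<Sum>I\<in>FF. (1 - y u) * (a I * (\<Prod>i\<in>I. (y(u := 0)) i))
                            + y u * (a I * (\<Prod>i\<in>I. (y(u := 1)) i)))"
    using assms(1) by (intro sum.cong refl) (simp add: prod_fun_upd_split[of _ y u] algebra_simps)
  then have split: "?f y = (1 - y u) * ?f (y(u := 0)) + y u * ?f (y(u := 1))"
    by (simp add: sum.distrib sum_distrib_left)
  have "?f y \<le> max (?f (y(u := 0))) (?f (y(u := 1)))"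
    unfolding split using yu convex_bound_le[of _ "max _ _" _ "1 - y u" "y u"] by simp
  then obtain c where "c = 0 \<or> c = 1" "?f y \<le> ?f (y(u := c))"
    by (metis max_def)
  then show ?case
    using y insert.hyps by (intro exI[of _ "y(u := c)"]) auto
qed

lemma powr_mult_le_Young:
  fixes n p y :: real
  assumes "p \<ge> 1" "n > 0" "y \<ge> 0"
  shows "n powr (1/p) * y \<le> n * y powr p / p + (1 - 1/p)"
proof (cases "y = 0")
  case True
  then show ?thesis using assms by (simp add: divide_le_eq_1)
next
  case False
  have "(n * y powr p) powr (1/p) * 1 powr (1 - 1/p) \<le> (1/p) * (n * y powr p) + (1 - 1/p) * 1"
    using assms False by (intro Youngs_inequality_0) auto
  moreover have "(n * y powr p) powr (1/p) = n powr (1/p) * y"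
    using assms False by (simp add: powr_mult powr_powr)
  ultimately show ?thesis by simp
qed

lemma sum_abs_le_card_powr:
  fixes x :: "nat \<Rightarrow> real"
  assumes "p \<ge> 1" "finite V" "V \<noteq> {}" "(\<Sum>i\<in>V. \<bar>x i\<bar> powr p) = 1"
  shows "(\<Sum>i\<in>V. \<bar>x i\<bar>) \<le> real (card V) powr (1 - 1/p)"
proof -
  let ?n = "real (card V)"
  have n: "?n > 0" using assms by (simp add: card_gt_0_iff)
  have "?n powr (1/p) * (\<Sum>i\<in>V. \<bar>x i\<bar>) = (\<Sum>i\<in>V. ?n powr (1/p) * \<bar>x i\<bar>)"
    by (simp add: sum_distrib_left)
  also have "\<dots> \<le> (\<Sum>i\<in>V. ?n * \<bar>x i\<bar> powr p / p + (1 - 1/p))"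
    using assms n by (intro sum_mono powr_mult_le_Young) auto
  also have "\<dots> = ?n / p * (\<Sum>i\<in>V. \<bar>x i\<bar> powr p) + ?n * (1 - 1/p)"
    by (simp add: sum.distrib sum_distrib_left sum_divide_distrib)
  also have "\<dots> = ?n" using assms by (simp add: algebra_simps)
  finally have "(\<Sum>i\<in>V. \<bar>x i\<bar>) \<le> ?n / ?n powr (1/p)"
    using n by (simp add: le_divide_eq mult.commute)
  also have "\<dots> = ?n powr (1 - 1/p)"
    using n by (simp add: powr_diff)
  finally show ?thesis .
qed

lemma pnorm_eq_1_iff:
  assumes "p > 0"
  shows "pnorm p V x = 1 \<longleftrightarrow> (\<Sum>i\<in>V. \<bar>x i\<bar> powr p) = 1"
proof
  assume "pnorm p V x = 1"
  then have "((\<Sum>i\<in>V. \<bar>x i\<bar> powr p) powr (1/p)) powr p = 1"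
    by (simp add: pnorm_def)
  moreover have "(\<Sum>i\<in>V. \<bar>x i\<bar> powr p) \<ge> 0" by (intro sum_nonneg) auto
  ultimately show "(\<Sum>i\<in>V. \<bar>x i\<bar> powr p) = 1"
    using assms by (simp add: powr_powr)
qed (simp add: pnorm_def)

lemma abs_le_1_if_sum_powr_eq_1:
  fixes x :: "nat \<Rightarrow> real"
  assumes "p > 0" "finite V" "(\<Sum>i\<in>V. \<bar>x i\<bar> powr p) = 1" "j \<in> V"
  shows "\<bar>x j\<bar> \<le> 1"
proof (rule ccontr)
  assume "\<not> \<bar>x j\<bar> \<le> 1"
  then have "1 < \<bar>x j\<bar> powr p" using assms(1) powr_less_mono2[of p 1 "\<bar>x j\<bar>"] by simp
  also have "\<dots> \<le> (\<Sum>i\<in>V. \<bar>x i\<bar> powr p)"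
    using assms by (intro member_le_sum) auto
  finally show False using assms by simp
qed

lemma lagr_poly_le_abs:
  "lagr_poly Q H x \<le> fact (card (fst Q)) *
     (\<Sum>I\<in>{I. I \<subseteq> fst H \<and> card I = card (fst Q)}.
        real (num_copies Q (induced H I)) * (\<Prod>i\<in>I. \<bar>x i\<bar>))"
  unfolding lagr_poly_def
  by (intro mult_left_mono sum_mono) (auto simp: abs_prod[symmetric] intro: mult_left_mono)

lemma pnorm_const:
  assumes "n \<ge> 1" "p > 0"
  shows "pnorm p {0..<n} (\<lambda>_. real n powr (-1/p)) = 1"
proof -
  have "\<bar>real n powr (-1/p)\<bar> powr p = 1 / real n"
    using assms by (simp add: powr_powr powr_neg_one)
  then show ?thesis
    using assms by (simp add: pnorm_eq_1_iff)
qed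

lemma pnorm_fun_upd_zero:
  assumes "v \<notin> V" "finite V" "p > 0"
  shows "pnorm p (insert v V) (x(v := 0)) = pnorm p V x"
proof -
  have "(\<Sum>i\<in>V. \<bar>(x(v := 0)) i\<bar> powr p) = (\<Sum>i\<in>V. \<bar>x i\<bar> powr p)"
    using assms(1) by (intro sum.cong) auto
  then show ?thesis
    using assms by (simp add: pnorm_def)
qed

lemma lagr_poly_insert_vertex:
  assumes "v \<notin> fst H" "finite (fst H)"
  shows "lagr_poly Q (insert v (fst H), snd H) (x(v := 0)) = lagr_poly Q H x"
proof -
  let ?H' = "(insert v (fst H), snd H)" and ?s = "card (fst Q)"
  have "(\<Sum>I\<in>{I. I \<subseteq> fst ?H' \<and> card I = ?s}. real (num_copies Q (induced ?H' I)) * (\<Prod>i\<in>I. (x(v := 0)) i))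
      = (\<Sum>I\<in>{I. I \<subseteq> fst H \<and> card I = ?s}. real (num_copies Q (induced H I)) * (\<Prod>i\<in>I. x i))"
  proof (rule sum.mono_neutral_cong_right)
    show "\<forall>I\<in>{I. I \<subseteq> fst ?H' \<and> card I = ?s} - {I. I \<subseteq> fst H \<and> card I = ?s}.
        real (num_copies Q (induced ?H' I)) * (\<Prod>i\<in>I. (x(v := 0)) i) = 0"
      using assms(2) by (auto intro!: prod_zero intro: finite_subset)
    show "real (num_copies Q (induced ?H' I)) * (\<Prod>i\<in>I. (x(v := 0)) i)
        = real (num_copies Q (induced H I)) * (\<Prod>i\<in>I. x i)"
      if "I \<in> {I. I \<subseteq> fst H \<and> card I = ?s}" for I
      using that assms(1) by (auto simp: induced_def intro!: prod.cong)
  qed (use assms in auto)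
  then show ?thesis by (simp add: lagr_poly_def)
qed

lemma fact_mult_binomial_div_power_tendsto:
  "(\<lambda>n. fact s * real (n choose s) / real n ^ s) \<longlonglongrightarrow> 1"
proof -
  have "fact s * real (n choose s) / real n ^ s = (\<Prod>i\<in>{0..<s}. 1 - real i / real n)"
    if "s \<le> n" "n > 0" for n
  proof -
    have "fact s * real (n choose s) / real n ^ s
        = (\<Prod>i\<in>{0..<s}. real (s - i) * (real (n - i) / real (s - i)) / real n)"
      using that(1) by (simp add: fact_prod_rev binomial_altdef_of_nat prod.distrib prod_dividef)
    also have "\<dots> = (\<Prod>i\<in>{0..<s}. 1 - real i / real n)"
      using that by (intro prod.cong) (auto simp: field_simps)
    finally show ?thesis .
  qed
  then have "\<forall>\<^sub>F n in sequentially. (\<Prod>i\<in>{0..<s}. 1 - real i / real n) = fact s * real (n choose s) / real n ^ s"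
    using eventually_ge_at_top[of "max s 1"] by (auto elim!: eventually_mono)
  moreover have "(\<lambda>n. \<Prod>i\<in>{0..<s}. 1 - real i / real n) \<longlonglongrightarrow> (\<Prod>i\<in>{0..<s}. 1 - 0)"
    by (intro tendsto_prod tendsto_diff tendsto_const lim_const_over_n)
  ultimately show ?thesis by (simp add: Lim_transform_eventually)
qed

section \<open>Extremal numbers in a hereditary property\<close>

locale hereditary_family =
  fixes r :: nat and P :: "hgraph set" and Q :: hgraph
  assumes hereditary: "hereditary r P" and P_nonempty: "P \<noteq> {}"
    and finite_Q: "finite (fst Q)" and Q_nonempty: "fst Q \<noteq> {}"
begin

abbreviation s :: nat where "s \<equiv> card (fst Q)"

lemma s_pos: "s > 0"
  using finite_Q Q_nonempty by (simp add: card_gt_0_iff)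

lemma finite_vertices_mem: "H \<in> P \<Longrightarrow> finite (fst H)"
  using hereditary by (simp add: hereditary_def is_rgraph_def)

lemma edges_subset_mem: "H \<in> P \<Longrightarrow> \<forall>e\<in>snd H. e \<subseteq> fst H"
  using hereditary by (simp add: hereditary_def is_rgraph_def)

lemma induced_mem: "H \<in> P \<Longrightarrow> I \<subseteq> fst H \<Longrightarrow> induced H I \<in> P"
  using hereditary unfolding hereditary_def by blast

lemma iso_mem: "H \<in> P \<Longrightarrow> hg_iso H G \<Longrightarrow> G \<in> P"
  using hereditary unfolding hereditary_def by blast

lemma insert_vertex_mem: "H \<in> P \<Longrightarrow> v \<notin> fst H \<Longrightarrow> (insert v (fst H), snd H) \<in> P"
  using hereditary unfolding hereditary_def by blast

lemma finite_Pn: "finite (Pn P n)"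
proof (rule finite_subset)
  show "Pn P n \<subseteq> {{0..<n}} \<times> Pow (Pow {0..<n})"
    using edges_subset_mem by (fastforce simp: Pn_def mem_Times_iff)
qed simp

lemma Pn_nonempty: "Pn P n \<noteq> {}"
proof -
  obtain H where "H \<in> P" using P_nonempty by blast
  then have "induced H {} \<in> P" by (simp add: induced_mem)
  then have "({0..<n}, snd (induced H {})) \<in> P"
  proof (induction n)
    case (Suc n)
    then show ?case using insert_vertex_mem[of "({0..<n}, snd (induced H {}))" n]
      by (simp add: atLeast0_lessThan_Suc)
  qed (simp add: induced_def)
  then show ?thesis by (auto simp: Pn_def)
qed

lemma num_copies_le_ex_num: "H \<in> Pn P n \<Longrightarrow> num_copies Q H \<le> ex_num Q P n"
  unfolding ex_num_def using finite_Pn by (intro Max_ge) auto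

lemma ex_num_attained: "\<exists>H\<in>Pn P n. num_copies Q H = ex_num Q P n"
proof -
  have "ex_num Q P n \<in> num_copies Q ` Pn P n"
    unfolding ex_num_def using finite_Pn Pn_nonempty by (intro Max_in) auto
  then show ?thesis by auto
qed

lemma num_copies_le_ex_num_card:
  assumes "H \<in> P"
  shows "num_copies Q H \<le> ex_num Q P (card (fst H))"
proof -
  obtain f where f: "bij_betw f (fst H) {0..<card (fst H)}"
    using ex_bij_betw_finite_nat[OF finite_vertices_mem[OF assms]] by blast
  let ?H' = "(f ` fst H, image f ` snd H)"
  have "hg_iso H ?H'" unfolding hg_iso_def using f by (auto simp: bij_betw_def)
  then have "?H' \<in> Pn P (card (fst H))"
    using assms f iso_mem by (simp add: Pn_def bij_betw_def)
  then have "num_copies Q ?H' \<le> ex_num Q P (card (fst H))"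
    by (rule num_copies_le_ex_num)
  moreover have "num_copies Q H \<le> num_copies Q ?H'"
    using f assms finite_vertices_mem edges_subset_mem
    by (intro num_copies_le_image) (auto simp: bij_betw_def)
  ultimately show ?thesis by linarith
qed

lemma num_copies_induced_le_ex_num:
  "H \<in> P \<Longrightarrow> S \<subseteq> fst H \<Longrightarrow> num_copies Q (induced H S) \<le> ex_num Q P (card S)"
  using num_copies_le_ex_num_card[OF induced_mem] by fastforce

text \<open>Katona--Nemetz--Simonovits averaging: count the copies of an extremal k-vertex graph through
  its m-vertex induced subgraphs.\<close>
lemma ex_num_mult_choose_le:
  assumes "s \<le> m" "m \<le> k"
  shows "ex_num Q P k * (m choose s) \<le> ex_num Q P m * (k choose s)"
proof -
  obtain H where H: "H \<in> Pn P k" "num_copies Q H = ex_num Q P k"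
    using ex_num_attained by blast
  have HP: "H \<in> P" and V: "fst H = {0..<k}" using H by (auto simp: Pn_def)
  let ?SS = "{S. S \<subseteq> fst H \<and> card S = m}" and ?c = "(k - s) choose (m - s)"
  have "?c * ex_num Q P k = (\<Sum>S\<in>?SS. num_copies Q (induced H S))"
    using sum_num_copies_induced[OF finite_vertices_mem[OF HP] assms(1)] H V by simp
  also have "\<dots> \<le> (\<Sum>S\<in>?SS. ex_num Q P m)"
  proof (rule sum_mono)
    fix S assume "S \<in> ?SS"
    then show "num_copies Q (induced H S) \<le> ex_num Q P m"
      using num_copies_induced_le_ex_num[OF HP, of S] by simp
  qed
  also have "\<dots> = (k choose m) * ex_num Q P m"
    using V by (simp add: n_subsets)
  finally have "?c * ex_num Q P k * (m choose s) \<le> (k choose m) * ex_num Q P m * (m choose s)"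
    by (rule mult_right_mono) simp
  also have "\<dots> = ((k choose m) * (m choose s)) * ex_num Q P m"
    by (simp add: ac_simps)
  also have "\<dots> = ?c * (ex_num Q P m * (k choose s))"
    unfolding choose_mult[OF assms] by (simp add: ac_simps)
  finally show ?thesis
    using assms by (simp add: mult.assoc)
qed

definition ex_density :: "nat \<Rightarrow> real" where
  "ex_density n = real (ex_num Q P n) / real (n choose s)"

lemma ex_density_nonneg: "ex_density n \<ge> 0"
  by (simp add: ex_density_def)

lemma ex_num_le_ex_density_mult:
  assumes "s \<le> m" "m \<le> k"
  shows "real (ex_num Q P k) \<le> ex_density m * real (k choose s)"
proof -
  have "real (ex_num Q P k) * real (m choose s) \<le> real (ex_num Q P m) * real (k choose s)"
    using ex_num_mult_choose_le[OF assms] by (metis of_nat_le_iff of_nat_mult)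
  then show ?thesis
    using assms by (simp add: ex_density_def field_simps)
qed

lemma ex_density_antimono: "s \<le> m \<Longrightarrow> m \<le> k \<Longrightarrow> ex_density k \<le> ex_density m"
  using ex_num_le_ex_density_mult[of m k] by (simp add: ex_density_def[of k] field_simps)

lemma ex_density_tendsto_pi_dens: "ex_density \<longlonglongrightarrow> pi_dens Q P"
proof -
  have "Bseq (\<lambda>n. ex_density (n + s))"
    using ex_density_antimono ex_density_nonneg
    by (intro BseqI'[of _ "ex_density s"]) (simp add: ex_density_nonneg)
  then have "convergent ex_density"
    by (rule Bseq_monoseq_convergent'_dec) (use ex_density_antimono in auto)
  moreover have "pi_dens Q P = lim ex_density"
    by (simp add: pi_dens_def ex_density_def[abs_def])
  ultimately show ?thesis by (simp add: convergent_LIMSEQ_iff)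
qed

lemma num_copies_induced_le:
  assumes H: "H \<in> Pn P n" and m: "s \<le> m" "m \<le> n" and S: "S \<subseteq> {0..<n}"
  shows "real (num_copies Q (induced H S)) \<le> ex_density m * real (card S choose s) + real (ex_num Q P m)"
proof -
  have HP: "H \<in> P" and V: "fst H = {0..<n}" using H by (auto simp: Pn_def)
  have fS: "finite S" using S finite_subset by blast
  show ?thesis
  proof (cases "m \<le> card S")
    case True
    have "real (num_copies Q (induced H S)) \<le> real (ex_num Q P (card S))"
      using num_copies_induced_le_ex_num[OF HP] S V by simp
    also have "\<dots> \<le> ex_density m * real (card S choose s)"
      using ex_num_le_ex_density_mult[OF m(1) True] .
    finally show ?thesis by simp
  next
    case False
    have "m - card S \<le> card ({0..<n} - S)" using S m fS by (simp add: card_Diff_subset)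
    then obtain T where T: "T \<subseteq> {0..<n} - S" "card T = m - card S"
      by (meson obtain_subset_with_card_n)
    have "finite T" using T(1) finite_subset by blast
    then have cT: "card (S \<union> T) = m" using T fS False by (subst card_Un_disjoint) auto
    have "num_copies Q (induced H S) \<le> num_copies Q (induced H (S \<union> T))"
      using T S V by (intro num_copies_induced_mono) auto
    also have "\<dots> \<le> ex_num Q P m"
      using num_copies_induced_le_ex_num[OF HP, of "S \<union> T"] T S V cT by auto
    finally show ?thesis using ex_density_nonneg[of m] by (simp add: add_increasing)
  qed
qed

text \<open>Round the weights q to the indicator of a vertex set S; there the polynomial equals
  N(Q,H[S]) - d(m) C(|S|,s).\<close>
lemma weighted_copies_le:
  assumes H: "H \<in> Pn P n" and m: "s \<le> m" "m \<le> n" and q: "\<forall>i\<in>{0..<n}. 0 \<le> q i \<and> q i \<le> 1"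
  shows "(\<Sum>I\<in>{I. I \<subseteq> {0..<n} \<and> card I = s}. real (num_copies Q (induced H I)) * (\<Prod>i\<in>I. q i))
         \<le> ex_density m * elem_sym {0..<n} s q + real (ex_num Q P m)"
proof -
  let ?SS = "{I. I \<subseteq> {0..<n} \<and> card I = s}"
  let ?a = "\<lambda>I. real (num_copies Q (induced H I)) - ex_density m"
  obtain y where y: "\<forall>i\<in>{0..<n}. y i = 0 \<or> y i = 1"
    "(\<Sum>I\<in>?SS. ?a I * (\<Prod>i\<in>I. q i)) \<le> (\<Sum>I\<in>?SS. ?a I * (\<Prod>i\<in>I. y i))"
    using multilinear_le_at_vertex[of ?SS "{0..<n}" q ?a] q finite_subset by blast
  define S where "S = {i \<in> {0..<n}. y i = 1}"
  have S: "S \<subseteq> {0..<n}" by (auto simp: S_def)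
  then have fin_S: "finite S" using finite_subset by blast
  have prod_y: "(\<Prod>i\<in>I. y i) = of_bool (I \<subseteq> S)" if I: "I \<in> ?SS" for I
  proof (cases "I \<subseteq> S")
    case False
    then obtain j where "j \<in> I" "y j = 0" using I y(1) by (auto simp: S_def)
    moreover have "finite I" using I finite_subset by blast
    ultimately show ?thesis using False by (auto intro: prod_zero)
  qed (auto simp: S_def intro: prod.neutral)
  have "(\<Sum>I\<in>?SS. ?a I * (\<Prod>i\<in>I. y i)) = (\<Sum>I\<in>?SS. ?a I * of_bool (I \<subseteq> S))"
    by (intro sum.cong) (simp_all add: prod_y)
  also have "\<dots> = (\<Sum>I\<in>{I. I \<subseteq> S \<and> card I = s}. ?a I)"
    using S by (intro sum.mono_neutral_cong_right) auto
  also have "\<dots> = real (num_copies Q (induced H S)) - ex_density m * real (card S choose s)"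
    using sum_num_copies_induced_subsets[OF fin_S, of Q H] fin_S
    by (simp add: sum_subtractf n_subsets mult.commute flip: of_nat_sum)
  also have "\<dots> \<le> real (ex_num Q P m)"
    using num_copies_induced_le[OF H m S] by simp
  finally have "(\<Sum>I\<in>?SS. ?a I * (\<Prod>i\<in>I. q i)) \<le> real (ex_num Q P m)"
    using y(2) by linarith
  then show ?thesis
    by (simp add: elem_sym_def left_diff_distrib sum_subtractf sum_distrib_left)
qed

end

section \<open>Lagrangians\<close>

locale hereditary_family_pnorm = hereditary_family +
  fixes p :: real
  assumes p_ge_1: "p \<ge> 1"
begin

lemma lagr_poly_le:
  assumes H: "H \<in> Pn P n" and m: "s \<le> m" "m \<le> n" and x: "pnorm p {0..<n} x = 1"
  shows "lagr_poly Q H x \<le> ex_density m * real n powr (s - s / p) + fact s * real (ex_num Q P m)"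
proof -
  let ?V = "{0..<n}" and ?q = "\<lambda>i. \<bar>x i\<bar>"
  have V: "fst H = ?V" using H by (simp add: Pn_def)
  have n: "n > 0" using m s_pos by linarith
  have sum_x: "(\<Sum>i\<in>?V. \<bar>x i\<bar> powr p) = 1"
    using x p_ge_1 by (simp add: pnorm_eq_1_iff)
  have "\<forall>i\<in>?V. 0 \<le> ?q i \<and> ?q i \<le> 1"
    using abs_le_1_if_sum_powr_eq_1[OF _ _ sum_x] p_ge_1 by auto
  then have "lagr_poly Q H x \<le> fact s * (ex_density m * elem_sym ?V s ?q + real (ex_num Q P m))"
    using lagr_poly_le_abs[of Q H x] weighted_copies_le[OF H m, of ?q] V
    by (auto elim!: order_trans intro: mult_left_mono)
  also have "\<dots> = ex_density m * (fact s * elem_sym ?V s ?q) + fact s * real (ex_num Q P m)"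
    by (simp add: algebra_simps)
  also have "fact s * elem_sym ?V s ?q \<le> (\<Sum>i\<in>?V. ?q i) ^ s"
    by (rule fact_elem_sym_le_power_sum) auto
  also have "\<dots> \<le> (real n powr (1 - 1/p)) ^ s"
    using sum_abs_le_card_powr[OF p_ge_1 _ _ sum_x] n by (intro power_mono sum_nonneg) auto
  also have "\<dots> = real n powr (s - s / p)"
    using n by (simp add: powr_realpow[symmetric] powr_powr algebra_simps)
  finally show ?thesis
    using ex_density_nonneg by (simp add: mult_left_mono)
qed

lemma lam_le:
  assumes H: "H \<in> Pn P n" and m: "s \<le> m" "m \<le> n"
  shows "lam p Q H \<le> ex_density m * real n powr (s - s / p) + fact s * real (ex_num Q P m)"
  unfolding lam_def
proof (rule cSup_least)
  have "n \<ge> 1" using m s_pos by linarith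
  then show "{lagr_poly Q H x |x. pnorm p (fst H) x = 1} \<noteq> {}"
    using pnorm_const[of n p] p_ge_1 H by (auto simp: Pn_def)
qed (use H lagr_poly_le[OF H m] in \<open>auto simp: Pn_def\<close>)

lemma lagr_poly_le_lam:
  assumes H: "H \<in> Pn P n" and n: "s \<le> n" and x: "pnorm p (fst H) x = 1"
  shows "lagr_poly Q H x \<le> lam p Q H"
  unfolding lam_def
proof (rule cSup_upper)
  show "bdd_above {lagr_poly Q H x |x. pnorm p (fst H) x = 1}"
    using H lagr_poly_le[OF H order_refl n] by (intro bdd_aboveI) (auto simp: Pn_def)
qed (use x in auto)

lemma lam_le_lam_n: "H \<in> Pn P n \<Longrightarrow> lam p Q H \<le> lam_n p Q P n"
  unfolding lam_n_def using finite_Pn by (intro cSup_upper bdd_above_finite) auto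

lemma lam_n_le:
  assumes "s \<le> m" "m \<le> n"
  shows "lam_n p Q P n \<le> ex_density m * real n powr (s - s / p) + fact s * real (ex_num Q P m)"
  unfolding lam_n_def using Pn_nonempty lam_le[OF _ assms] by (intro cSup_least) auto

lemma lam_n_ge:
  assumes n: "s \<le> n"
  shows "fact s * real (ex_num Q P n) * real n powr (- real s / p) \<le> lam_n p Q P n"
proof -
  obtain H where H: "H \<in> Pn P n" "num_copies Q H = ex_num Q P n"
    using ex_num_attained by blast
  have V: "fst H = {0..<n}" using H by (simp add: Pn_def)
  have n_pos: "n > 0" using n s_pos by linarith
  have "(real n powr (-1/p)) ^ s = real n powr (- real s / p)"
    using n_pos by (simp add: powr_realpow[symmetric] powr_powr)
  then have "fact s * real (ex_num Q P n) * real n powr (- real s / p) = lagr_poly Q H (\<lambda>_. real n powr (-1/p))"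
    using lagr_poly_const[of H Q] H V by (simp add: ac_simps)
  also have "\<dots> \<le> lam p Q H"
    by (intro lagr_poly_le_lam[OF H(1) n]) (use pnorm_const[of n p] n_pos p_ge_1 V in auto)
  also have "\<dots> \<le> lam_n p Q P n"
    by (rule lam_le_lam_n[OF H(1)])
  finally show ?thesis .
qed

lemma lam_n_le_Suc:
  assumes n: "s \<le> n"
  shows "lam_n p Q P n \<le> lam_n p Q P (Suc n)"
  unfolding lam_n_def[of p Q P n]
proof (rule cSup_least)
  show "lam p Q ` Pn P n \<noteq> {}" using Pn_nonempty by simp
next
  fix v assume "v \<in> lam p Q ` Pn P n"
  then obtain H where H: "H \<in> Pn P n" and v: "v = lam p Q H" by blast
  let ?H' = "(insert n (fst H), snd H)"
  have V: "fst H = {0..<n}" and "H \<in> P" using H by (auto simp: Pn_def)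
  then have H': "?H' \<in> Pn P (Suc n)"
    using insert_vertex_mem[of H n] by (simp add: Pn_def atLeast0_lessThan_Suc)
  have "lam p Q H \<le> lam p Q ?H'"
    unfolding lam_def[of p Q H]
  proof (rule cSup_least)
    show "{lagr_poly Q H x |x. pnorm p (fst H) x = 1} \<noteq> {}"
      using n s_pos p_ge_1 V pnorm_const[of n p] by auto
  next
    fix w assume "w \<in> {lagr_poly Q H x |x. pnorm p (fst H) x = 1}"
    then obtain x where w: "w = lagr_poly Q H x" and x: "pnorm p (fst H) x = 1" by blast
    have "pnorm p (fst ?H') (x(n := 0)) = 1"
      using x V p_ge_1 by (simp add: pnorm_fun_upd_zero)
    then have "lagr_poly Q ?H' (x(n := 0)) \<le> lam p Q ?H'"
      using n by (intro lagr_poly_le_lam[OF H']) auto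
    then show "w \<le> lam p Q ?H'"
      using w V lagr_poly_insert_vertex[of n H Q x] by simp
  qed
  also have "\<dots> \<le> lam_n p Q P (Suc n)" by (rule lam_le_lam_n[OF H'])
  finally show "v \<le> lam_n p Q P (Suc n)" using v by simp
qed

definition lam_scaled :: "nat \<Rightarrow> real" where
  "lam_scaled n = lam_n p Q P n * real n powr (s / p - s)"

lemma lam_scaled_ge:
  assumes "s \<le> n"
  shows "ex_density n * (fact s * real (n choose s) / real n ^ s) \<le> lam_scaled n"
proof -
  have n_pos: "real n > 0" using assms s_pos by simp
  have "real n powr (- real s / p) * real n powr (s / p - s) = real n powr (- real s)"
    by (simp add: powr_add[symmetric])
  also have "\<dots> = 1 / real n ^ s"
    using n_pos by (simp add: powr_minus_divide powr_realpow)
  finally have "ex_density n * (fact s * real (n choose s) / real n ^ s)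
      = fact s * real (ex_num Q P n) * real n powr (- real s / p) * real n powr (s / p - s)"
    using assms by (simp add: ex_density_def field_simps)
  also have "\<dots> \<le> lam_scaled n"
    unfolding lam_scaled_def using lam_n_ge[OF assms] by (intro mult_right_mono) auto
  finally show ?thesis .
qed

lemma lam_scaled_le:
  assumes "s \<le> m" "m \<le> n"
  shows "lam_scaled n \<le> ex_density m + fact s * real (ex_num Q P m) * real n powr (s / p - s)"
proof -
  have n_pos: "real n > 0" using assms s_pos by simp
  have "lam_scaled n \<le> (ex_density m * real n powr (s - s / p) + fact s * real (ex_num Q P m))
                        * real n powr (s / p - s)"
    unfolding lam_scaled_def using lam_n_le[OF assms] by (intro mult_right_mono) auto
  also have "\<dots> = ex_density m + fact s * real (ex_num Q P m) * real n powr (s / p - s)"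
    using n_pos by (simp add: algebra_simps powr_add[symmetric])
  finally show ?thesis .
qed

lemma convergent_lam_scaled_p_eq_1:
  assumes "p = 1"
  shows "convergent lam_scaled"
proof (rule Bseq_monoseq_convergent'_inc)
  have scaled: "lam_scaled n = lam_n p Q P n" if "n \<ge> s" for n
    unfolding lam_scaled_def using that s_pos assms by simp
  show "lam_scaled m \<le> lam_scaled n" if "s \<le> m" "m \<le> n" for m n
    using that(2,1) by (induction n rule: dec_induct) (auto simp: scaled intro: order_trans lam_n_le_Suc)
  have "0 \<le> lam_scaled (n + s)" for n
    by (rule order_trans[OF _ lam_scaled_ge], intro mult_nonneg_nonneg divide_nonneg_nonneg ex_density_nonneg)
      simp_all
  moreover have "lam_scaled (n + s) \<le> ex_density s + fact s * real (ex_num Q P s)" for n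
    using lam_scaled_le[of s "n + s"] assms s_pos by simp
  ultimately show "Bseq (\<lambda>n. lam_scaled (n + s))"
    by (intro BseqI'[of _ "ex_density s + fact s * real (ex_num Q P s)"]) auto
qed

text \<open>For p > 1 the error term of the upper bound vanishes, so d(m) bounds the limsup for every m.\<close>
lemma lam_scaled_tendsto_pi_dens:
  assumes "p > 1"
  shows "lam_scaled \<longlonglongrightarrow> pi_dens Q P"
proof (rule order_tendstoI)
  fix a assume "a < pi_dens Q P"
  then have "\<forall>\<^sub>F n in sequentially. a < ex_density n * (fact s * real (n choose s) / real n ^ s)"
    using tendsto_mult[OF ex_density_tendsto_pi_dens fact_mult_binomial_div_power_tendsto]
    by (auto dest: order_tendstoD(1))
  then show "\<forall>\<^sub>F n in sequentially. a < lam_scaled n"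
    using eventually_ge_at_top[of s] by eventually_elim (use lam_scaled_ge in fastforce)
next
  fix a assume a: "pi_dens Q P < a"
  define b where "b = (pi_dens Q P + a) / 2"
  have b: "pi_dens Q P < b" "b < a" using a by (auto simp: b_def)
  have "\<forall>\<^sub>F m in sequentially. s \<le> m \<and> ex_density m < b"
    using order_tendstoD(2)[OF ex_density_tendsto_pi_dens b(1)] eventually_ge_at_top[of s]
    by (simp add: eventually_conj_iff)
  then obtain m where m: "s \<le> m" "ex_density m < b"
    by (auto simp: eventually_sequentially)
  have "s / p - s < 0" using assms s_pos by (simp add: divide_less_eq)
  then have "(\<lambda>n. fact s * real (ex_num Q P m) * real n powr (s / p - s)) \<longlonglongrightarrow> fact s * real (ex_num Q P m) * 0"
    by (intro tendsto_mult tendsto_const tendsto_neg_powr filterlim_real_sequentially)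
  then have "\<forall>\<^sub>F n in sequentially. fact s * real (ex_num Q P m) * real n powr (s / p - s) < a - b"
    using b by (intro order_tendstoD(2)) auto
  then show "\<forall>\<^sub>F n in sequentially. lam_scaled n < a"
    using eventually_ge_at_top[of m]
    by eventually_elim (use lam_scaled_le[OF m(1)] m(2) in fastforce)
qed

lemma pi_dens_le_lam_prop: "pi_dens Q P \<le> lam_prop p Q P"
proof -
  have "convergent lam_scaled"
    using convergent_lam_scaled_p_eq_1 lam_scaled_tendsto_pi_dens p_ge_1
    by (cases "p = 1") (auto simp: convergent_def)
  then have "lam_scaled \<longlonglongrightarrow> lam_prop p Q P"
    by (simp add: lam_prop_def lam_scaled_def[abs_def] convergent_LIMSEQ_iff)
  moreover have "\<forall>\<^sub>F n in sequentially. ex_density n * (fact s * real (n choose s) / real n ^ s) \<le> lam_scaled n"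
    using eventually_ge_at_top[of s] by eventually_elim (rule lam_scaled_ge)
  ultimately show ?thesis
    using tendsto_le[OF _ _ tendsto_mult[OF ex_density_tendsto_pi_dens fact_mult_binomial_div_power_tendsto]]
    by simp
qed

end

theorem mainTheorem3:
  fixes p :: real and r s :: nat and Q :: hgraph and P :: "hgraph set"
  assumes "p \<ge> 1" and "r \<ge> 2" and "s \<ge> r"
    and "is_rgraph r Q" and "card (fst Q) = s"
    and "hereditary r P" and "P \<noteq> {}"
  shows "lam_prop p Q P \<ge> pi_dens Q P"
proof (rule hereditary_family_pnorm.pi_dens_le_lam_prop)
  show "hereditary_family_pnorm r P Q p"
    using assms by unfold_locales (auto simp: is_rgraph_def)
qed

end
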